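(* Let $d \geq 2$, $N, K \geq 1$ be integers, $\mathbf{y}_1,\ldots,\mathbf{y}_N \in \mathbb{R}^d$ with matrix $\mathbf{Y} = [\mathbf{y}_1,\ldots,\mathbf{y}_N]$, and $\rho_k^{[i]} \geq 0$ with $\sum_{k=1}^K \rho_k^{[i]} = 1$ for each $i$. Put $\mathbf{A}_k = \sum_{i} \rho_k^{[i]}\mathbf{y}_i\mathbf{y}_i^\mathrm{T}$, $\gamma_k = \sum_i \rho_k^{[i]}$, $\lambda_k = $ largest eigenvalue of $\mathbf{A}_k$. For $S \subseteq [K]$ define $\sigma^2(S) = \big(\|\mathbf{Y}\|_\mathrm{F}^2 - \sum_{k\in S}\lambda_k\big)/\big(dN - \sum_{k\in S}\gamma_k\big)$ and $g(S) = \big[dN - \sum_{k\in S}\gamma_k\big]\ln\sigma^2(S) + \sum_{k\in S}\gamma_k\ln(\lambda_k/\gamma_k)$, and assume $\gamma_k>0$, $\lambda_k>0$ for all $k$ and $\sigma^2(S)>0$ for all $S\subseteq[K]$. Let $\mathcal{V} = \{S \subseteq [K] : \sigma^2(S) \leq \lambda_k/\gamma_k \text{ for all } k \in S\}$. Then there exists a minimizer $\hat{S}$ of $g$ over $\mathcal{V}$ that is saturated, i.e. $\hat{S} \in \mathcal{V}$ and $\sigma^2(\hat{S}) > \lambda_j/\gamma_j$ for all $j \in [K]\setminus\hat{S}$.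
   Context: $[K] = \{1,\ldots,K\}$; $\|\cdot\|_\mathrm{F}$ is the Frobenius norm. *)

theory Defs
  imports "HOL-Analysis.Analysis"
begin

definition outer_prod :: "real^'d \<Rightarrow> real^'d \<Rightarrow> real^'d^'d" where
  "outer_prod u v = (\<chi> i j. u $ i * v $ j)"

definition largest_eigenvalue :: "real^'d^'d \<Rightarrow> real" where
  "largest_eigenvalue M = Max {l. \<exists>v. v \<noteq> 0 \<and> M *v v = l *\<^sub>R v}"

text \<open>A_k = sum_i rho_k^[i] y_i y_i^T, indices i in {1..N}; rho k i stands for rho_k^[i].\<close>
definition Amat :: "nat \<Rightarrow> (nat \<Rightarrow> real^'d) \<Rightarrow> (nat \<Rightarrow> nat \<Rightarrow> real) \<Rightarrow> nat \<Rightarrow> real^'d^'d" where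
  "Amat N y rho k = (\<Sum>i\<in>{1..N}. rho k i *\<^sub>R outer_prod (y i) (y i))"

definition gam :: "nat \<Rightarrow> (nat \<Rightarrow> nat \<Rightarrow> real) \<Rightarrow> nat \<Rightarrow> real" where
  "gam N rho k = (\<Sum>i\<in>{1..N}. rho k i)"

definition lam :: "nat \<Rightarrow> (nat \<Rightarrow> real^'d) \<Rightarrow> (nat \<Rightarrow> nat \<Rightarrow> real) \<Rightarrow> nat \<Rightarrow> real" where
  "lam N y rho k = largest_eigenvalue (Amat N y rho k)"

definition frob_sq :: "nat \<Rightarrow> (nat \<Rightarrow> real^'d) \<Rightarrow> real" where
  "frob_sq N y = (\<Sum>i\<in>{1..N}. \<Sum>j\<in>UNIV. (y i $ j)^2)"

definition sigma2 :: "nat \<Rightarrow> (nat \<Rightarrow> real^'d) \<Rightarrow> (nat \<Rightarrow> nat \<Rightarrow> real) \<Rightarrow> nat set \<Rightarrow> real" where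
  "sigma2 N y rho S =
     (frob_sq N y - (\<Sum>k\<in>S. lam N y rho k)) /
     (real CARD('d) * real N - (\<Sum>k\<in>S. gam N rho k))"

definition gfun :: "nat \<Rightarrow> (nat \<Rightarrow> real^'d) \<Rightarrow> (nat \<Rightarrow> nat \<Rightarrow> real) \<Rightarrow> nat set \<Rightarrow> real" where
  "gfun N y rho S =
     (real CARD('d) * real N - (\<Sum>k\<in>S. gam N rho k)) * ln (sigma2 N y rho S)
     + (\<Sum>k\<in>S. gam N rho k * ln (lam N y rho k / gam N rho k))"

definition Vset :: "nat \<Rightarrow> nat \<Rightarrow> (nat \<Rightarrow> real^'d) \<Rightarrow> (nat \<Rightarrow> nat \<Rightarrow> real) \<Rightarrow> nat set set" where
  "Vset K N y rho = {S. S \<subseteq> {1..K} \<and>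
      (\<forall>k\<in>S. sigma2 N y rho S \<le> lam N y rho k / gam N rho k)}"

end

theory Submission
  imports Defs
begin

text \<open>
  Adding an index \<open>j \<notin> S\<close> to \<open>S\<close> never increases \<open>g\<close>: by the log-sum inequality,
  splitting the pooled term \<open>(n + a) ln ((m + b) / (n + a))\<close> into
  \<open>n ln (m / n) + a ln (b / a)\<close> can only decrease it.  Moreover \<open>\<sigma>\<^sup>2(S)\<close> is the mediant
  of \<open>\<sigma>\<^sup>2(S \<union> {j})\<close> and \<open>\<lambda>\<^sub>j / \<gamma>\<^sub>j\<close>, so if \<open>\<sigma>\<^sup>2(S) \<le> \<lambda>\<^sub>j / \<gamma>\<^sub>j\<close> then
  \<open>\<sigma>\<^sup>2(S \<union> {j}) \<le> \<sigma>\<^sup>2(S)\<close> and \<open>S \<union> {j}\<close> stays in \<open>\<V>\<close>.  Hence a minimiser of \<open>g\<close>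
  on \<open>\<V>\<close> of maximal cardinality is saturated.
\<close>

lemma log_sum_inequality:
  fixes n m a b :: real
  assumes "n > 0" "m > 0" "a > 0" "b > 0"
  shows "n * ln (m / n) + a * ln (b / a) \<le> (n + a) * ln ((m + b) / (n + a))"
proof -
  define M where "M = (m + b) / (n + a)"
  have "M > 0" using assms by (simp add: M_def)
  have weighted_ln_le: "u * ln (v / u) \<le> v / M - u + u * ln M" if "u > 0" "v > 0" for u v
  proof -
    have "u * ln (v / u) = u * ln (v / (u * M)) + u * ln M"
      using that \<open>M > 0\<close> by (simp add: ln_div ln_mult algebra_simps)
    also have "\<dots> \<le> u * (v / (u * M) - 1) + u * ln M"
      using that \<open>M > 0\<close> by (simp add: ln_le_minus_one)
    also have "\<dots> = v / M - u + u * ln M"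
      using that \<open>M > 0\<close> by (simp add: field_simps)
    finally show ?thesis .
  qed
  have "m / M + b / M = (m + b) / M"
    by (simp add: add_divide_distrib)
  also have "\<dots> = n + a"
    using assms by (simp add: M_def)
  finally show ?thesis
    using weighted_ln_le[of n m] weighted_ln_le[of a b] assms
    by (simp add: M_def algebra_simps)
qed

lemma left_le_mediant:
  fixes n m a b :: real
  assumes "n > 0" "a > 0" "(m + b) / (n + a) \<le> b / a"
  shows "m / n \<le> (m + b) / (n + a)"
  using assms by (simp add: field_simps)

locale variance_selection =
  fixes I :: "'a set" and D F :: real and ga la :: "'a \<Rightarrow> real"
  assumes finite_index: "finite I"
    and ga_pos: "k \<in> I \<Longrightarrow> ga k > 0"
    and la_pos: "k \<in> I \<Longrightarrow> la k > 0"
    and sum_ga_less: "S \<subseteq> I \<Longrightarrow> sum ga S < D"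
    and sum_la_less: "S \<subseteq> I \<Longrightarrow> sum la S < F"
begin

definition resid_var :: "'a set \<Rightarrow> real" where
  "resid_var S = (F - sum la S) / (D - sum ga S)"

definition cost :: "'a set \<Rightarrow> real" where
  "cost S = (D - sum ga S) * ln (resid_var S) + (\<Sum>k\<in>S. ga k * ln (la k / ga k))"

definition admissible :: "'a set set" where
  "admissible = {S. S \<subseteq> I \<and> (\<forall>k\<in>S. resid_var S \<le> la k / ga k)}"

lemma finite_admissible: "finite admissible"
  unfolding admissible_def using finite_index by (simp add: finite_subset)

lemma resid_var_insert:
  assumes "S \<subseteq> I" "j \<in> I" "j \<notin> S"
  defines "n \<equiv> D - sum ga (insert j S)" and "m \<equiv> F - sum la (insert j S)"
  shows "n > 0" "m > 0" "resid_var (insert j S) = m / n"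
    "resid_var S = (m + la j) / (n + ga j)" "D - sum ga S = n + ga j"
proof -
  have "finite S" using assms(1) finite_index finite_subset by blast
  show "n > 0" "m > 0"
    using assms sum_ga_less[of "insert j S"] sum_la_less[of "insert j S"] by auto
  show "resid_var (insert j S) = m / n"
    by (simp add: resid_var_def n_def m_def)
  show "resid_var S = (m + la j) / (n + ga j)" "D - sum ga S = n + ga j"
    using \<open>finite S\<close> assms(3) by (simp_all add: resid_var_def n_def m_def)
qed

lemma cost_insert_le:
  assumes "S \<subseteq> I" "j \<in> I" "j \<notin> S"
  shows "cost (insert j S) \<le> cost S"
proof -
  define n where "n = D - sum ga (insert j S)"
  define m where "m = F - sum la (insert j S)"
  note insert_facts = resid_var_insert[OF assms, folded n_def m_def]
  define rest where "rest = (\<Sum>k\<in>S. ga k * ln (la k / ga k))"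
  have "finite S" using assms(1) finite_index finite_subset by blast
  then have "cost (insert j S) = n * ln (m / n) + ga j * ln (la j / ga j) + rest"
    using assms(3) insert_facts(3) unfolding cost_def n_def[symmetric] rest_def by simp
  also have "\<dots> \<le> (n + ga j) * ln ((m + la j) / (n + ga j)) + rest"
    using log_sum_inequality insert_facts ga_pos[OF assms(2)] la_pos[OF assms(2)] by simp
  also have "\<dots> = cost S"
    by (simp only: cost_def rest_def insert_facts(4,5))
  finally show ?thesis .
qed

lemma resid_var_insert_le:
  assumes "S \<subseteq> I" "j \<in> I" "j \<notin> S" and "resid_var S \<le> la j / ga j"
  shows "resid_var (insert j S) \<le> resid_var S"
  using left_le_mediant resid_var_insert[OF assms(1-3)] ga_pos[OF assms(2)] assms(4) by simp

lemma insert_admissible: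
  assumes "S \<in> admissible" "j \<in> I" "j \<notin> S" and "resid_var S \<le> la j / ga j"
  shows "insert j S \<in> admissible"
proof -
  have "S \<subseteq> I" using assms(1) by (simp add: admissible_def)
  then have "resid_var (insert j S) \<le> resid_var S"
    using resid_var_insert_le assms(2-4) by blast
  then show ?thesis
    using assms by (force simp: admissible_def)
qed

lemma ex_saturated_minimiser:
  "\<exists>S\<in>admissible. (\<forall>T\<in>admissible. cost S \<le> cost T) \<and>
     (\<forall>j\<in>I - S. resid_var S > la j / ga j)"
proof -
  let ?minimiser = "\<lambda>S. S \<in> admissible \<and> (\<forall>T\<in>admissible. cost S \<le> cost T)"
  obtain S0 where "?minimiser S0"
    using ex_is_arg_min_if_finite[OF finite_admissible, of cost] admissible_def
    by (auto simp: is_arg_min_linorder)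
  moreover have "card S < Suc (card I)" if "?minimiser S" for S
    using that finite_index by (simp add: admissible_def card_mono le_imp_less_Suc)
  ultimately obtain S where S: "?minimiser S"
    and max_card: "\<And>T. ?minimiser T \<Longrightarrow> card T \<le> card S"
    using ex_has_greatest_nat[of ?minimiser S0 card "Suc (card I)"] by blast
  have "S \<subseteq> I" using S by (simp add: admissible_def)
  have "resid_var S > la j / ga j" if "j \<in> I - S" for j
  proof (rule ccontr)
    assume "\<not> resid_var S > la j / ga j"
    then have "insert j S \<in> admissible"
      using S that by (intro insert_admissible) auto
    moreover have "cost (insert j S) \<le> cost S"
      using \<open>S \<subseteq> I\<close> that by (intro cost_insert_le) auto
    ultimately have "?minimiser (insert j S)"
      using S by fastforce
    then have "card (insert j S) \<le> card S" by (rule max_card)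
    then show False
      using that \<open>S \<subseteq> I\<close> finite_index finite_subset by fastforce
  qed
  then show ?thesis using S by blast
qed

end

lemma sum_gam_eq:
  assumes "\<And>i. i \<in> {1..N} \<Longrightarrow> (\<Sum>k\<in>{1..K}. rho k i) = 1"
  shows "(\<Sum>k\<in>{1..K}. gam N rho k) = real N"
proof -
  have "(\<Sum>k\<in>{1..K}. gam N rho k) = (\<Sum>i\<in>{1..N}. \<Sum>k\<in>{1..K}. rho k i)"
    unfolding gam_def by (rule sum.swap)
  also have "\<dots> = real N" using assms by simp
  finally show ?thesis .
qed

theorem lemma4:
  fixes y :: "nat \<Rightarrow> real^'d" and rho :: "nat \<Rightarrow> nat \<Rightarrow> real" and N K :: nat
  assumes "CARD('d) \<ge> 2" and "N \<ge> 1" and "K \<ge> 1"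
    and "\<And>k i. k \<in> {1..K} \<Longrightarrow> i \<in> {1..N} \<Longrightarrow> rho k i \<ge> 0"
    and "\<And>i. i \<in> {1..N} \<Longrightarrow> (\<Sum>k\<in>{1..K}. rho k i) = 1"
    and "\<And>k. k \<in> {1..K} \<Longrightarrow> gam N rho k > 0"
    and "\<And>k. k \<in> {1..K} \<Longrightarrow> (lam N y rho k :: real) > 0"
    and "\<And>S. S \<subseteq> {1..K} \<Longrightarrow> sigma2 N y rho S > 0"
  shows "\<exists>S\<in>Vset K N y rho.
           (\<forall>T\<in>Vset K N y rho. gfun N y rho S \<le> gfun N y rho T) \<and>
           (\<forall>j\<in>{1..K} - S. sigma2 N y rho S > lam N y rho j / gam N rho j)"
proof -
  have sum_gam_less: "sum (gam N rho) S < real CARD('d) * real N" if "S \<subseteq> {1..K}" for S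
  proof -
    have "sum (gam N rho) S \<le> (\<Sum>k\<in>{1..K}. gam N rho k)"
      using that assms(6) by (intro sum_mono2) (auto intro: less_imp_le)
    also have "\<dots> < real CARD('d) * real N"
      using sum_gam_eq[OF assms(5)] assms(1,2) by simp
    finally show ?thesis .
  qed
  have "sum (lam N y rho) S < frob_sq N y" if "S \<subseteq> {1..K}" for S
    using assms(8)[OF that] sum_gam_less[OF that]
    by (simp add: sigma2_def zero_less_divide_iff)
  then interpret variance_selection "{1..K}" "real CARD('d) * real N" "frob_sq N y"
      "gam N rho" "lam N y rho"
    using sum_gam_less assms(6,7) by unfold_locales auto
  have "resid_var = sigma2 N y rho"
    by (simp add: fun_eq_iff resid_var_def sigma2_def)
  moreover have "cost = gfun N y rho"
    by (simp add: fun_eq_iff cost_def gfun_def resid_var_def sigma2_def)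
  moreover have "admissible = Vset K N y rho"
    unfolding admissible_def Vset_def \<open>resid_var = sigma2 N y rho\<close> ..
  ultimately show ?thesis using ex_saturated_minimiser by simp
qed

end
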